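(* Let $p$ be an odd prime, $q=p^m$, $q=et+1$ with integers $e\geq 2,t\geq 1$, $R_{e,q}=\mathbb{F}_q[u]/\langle u^e-1\rangle$, and let $\varphi:R_{e,q}^n\to\mathbb{F}_q^{en}$ be the Gray map defined by a matrix $M\in GL_e(\mathbb{F}_q)$ with $MM^T=\gamma I_e$, $\gamma\in\mathbb{F}_q^*$ (see context). For every linear code $\mathcal{C}$ of length $n$ over $R_{e,q}$, $\varphi(\mathcal{C}\cap\mathcal{C}^\perp)=\varphi(\mathcal{C})\cap\varphi(\mathcal{C})^\perp$.
   Context: Write $u^e-1=\prod_{i=1}^e(u-\alpha_i)$ over $\mathbb{F}_q$, $G_i=u-\alpha_i$, $\widehat{G}_i=(u^e-1)/G_i$, $z_iG_i+h_i\widehat{G}_i=1$, $\mu_i=h_i\widehat{G}_i$; these are pairwise orthogonal idempotents summing to $1$, and each $r\in R_{e,q}$ is uniquely $r=\sum_i s_i\mu_i$, $s_i\in\mathbb{F}_q$. The Gray map is $\varphi(r_0,\dots,r_{n-1})=(\boldsymbol{r_0}M,\dots,\boldsymbol{r_{n-1}}M)$ with $\boldsymbol{r_j}=(s_{j,1},\dots,s_{j,e})$ for $r_j=\sum_i s_{j,i}\mu_i$. Duals are Euclidean (over $R_{e,q}$ and over $\mathbb{F}_q$). *)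

theory Defs
  imports "HOL-Computational_Algebra.Polynomial" "HOL-Library.Cardinality"
begin

text \<open>The ring R_{e,q} = F_q[u]/(u^e - 1) is represented by polynomials of degree < e,
  with multiplication reduced modulo u^e - 1.\<close>

definition Upoly :: "nat \<Rightarrow> 'a::field poly" where
  "Upoly e = monom 1 e - 1"

definition Rcarrier :: "nat \<Rightarrow> 'a::field poly set" where
  "Rcarrier e = {r. r = 0 \<or> degree r < e}"

definition Rmult :: "nat \<Rightarrow> 'a::field poly \<Rightarrow> 'a poly \<Rightarrow> 'a poly" where
  "Rmult e a b = (a * b) mod Upoly e"

definition Rvecs :: "nat \<Rightarrow> nat \<Rightarrow> (nat \<Rightarrow> 'a::field poly) set" where
  "Rvecs e n = {x. (\<forall>j<n. x j \<in> Rcarrier e) \<and> (\<forall>j\<ge>n. x j = 0)}"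

definition R_linear_code :: "nat \<Rightarrow> nat \<Rightarrow> (nat \<Rightarrow> 'a::field poly) set \<Rightarrow> bool" where
  "R_linear_code e n C \<longleftrightarrow> C \<subseteq> Rvecs e n \<and> (\<lambda>j. 0) \<in> C \<and>
     (\<forall>x\<in>C. \<forall>y\<in>C. (\<lambda>j. x j + y j) \<in> C) \<and>
     (\<forall>r\<in>Rcarrier e. \<forall>x\<in>C. (\<lambda>j. Rmult e r (x j)) \<in> C)"

definition Rdual :: "nat \<Rightarrow> nat \<Rightarrow> (nat \<Rightarrow> 'a::field poly) set \<Rightarrow> (nat \<Rightarrow> 'a poly) set" where
  "Rdual e n C = {x \<in> Rvecs e n. \<forall>c\<in>C. (\<Sum>j<n. x j * c j) mod Upoly e = 0}"

definition Fvecs :: "nat \<Rightarrow> (nat \<Rightarrow> 'a::field) set" where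
  "Fvecs N = {y. \<forall>k\<ge>N. y k = 0}"

definition Fdual :: "nat \<Rightarrow> (nat \<Rightarrow> 'a::field) set \<Rightarrow> (nat \<Rightarrow> 'a) set" where
  "Fdual N D = {y \<in> Fvecs N. \<forall>d\<in>D. (\<Sum>k<N. y k * d k) = 0}"

text \<open>G_i = u - alpha_i, Ghat_i = (u^e-1)/G_i, h_i with z_i G_i + h_i Ghat_i = 1,
  mu_i = h_i Ghat_i (reduced mod u^e - 1). Indices i range over 0..<e.\<close>
definition Gpoly :: "(nat \<Rightarrow> 'a::field) \<Rightarrow> nat \<Rightarrow> 'a poly" where
  "Gpoly \<alpha> i = [:- \<alpha> i, 1:]"

definition Ghat :: "nat \<Rightarrow> (nat \<Rightarrow> 'a::field) \<Rightarrow> nat \<Rightarrow> 'a poly" where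
  "Ghat e \<alpha> i = Upoly e div Gpoly \<alpha> i"

definition hpoly :: "nat \<Rightarrow> (nat \<Rightarrow> 'a::field) \<Rightarrow> nat \<Rightarrow> 'a poly" where
  "hpoly e \<alpha> i = (SOME h. \<exists>z. z * Gpoly \<alpha> i + h * Ghat e \<alpha> i = 1)"

definition mu :: "nat \<Rightarrow> (nat \<Rightarrow> 'a::field) \<Rightarrow> nat \<Rightarrow> 'a poly" where
  "mu e \<alpha> i = (hpoly e \<alpha> i * Ghat e \<alpha> i) mod Upoly e"

definition coords :: "nat \<Rightarrow> (nat \<Rightarrow> 'a::field) \<Rightarrow> 'a poly \<Rightarrow> nat \<Rightarrow> 'a" where
  "coords e \<alpha> r = (THE s. (\<forall>i\<ge>e. s i = 0) \<and> r = (\<Sum>i<e. smult (s i) (mu e \<alpha> i)))"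

text \<open>Gray map: block j of the image is the row vector coords(r_j) times M.
  Position j*e + k holds entry k of block j.\<close>
definition gray :: "nat \<Rightarrow> (nat \<Rightarrow> 'a::field) \<Rightarrow> (nat \<Rightarrow> nat \<Rightarrow> 'a) \<Rightarrow> nat
                     \<Rightarrow> (nat \<Rightarrow> 'a poly) \<Rightarrow> nat \<Rightarrow> 'a" where
  "gray e \<alpha> M n x = (\<lambda>k. if k < e * n
      then (\<Sum>i<e. coords e \<alpha> (x (k div e)) i * M i (k mod e)) else 0)"

end

theory Submission
  imports Defs
begin

text \<open>As q = et + 1, the characteristic does not divide e, so u^e - 1 is separable and the
  \<alpha>_i are distinct. Evaluation at the \<alpha>_i is then an isomorphism from R_{e,q} onto F_q^e
  taking \<mu>_i to the i-th unit vector, so the coordinates of r are its values r(\<alpha>_i). Since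
  M M^T = \<gamma> I, the Euclidean product of two Gray images is \<gamma> times the sum over i of the
  values at \<alpha>_i of their inner product over R_{e,q}; hence the Gray image of C \<inter> C^\<bottom> is
  orthogonal to the Gray image of C. Conversely, if \<phi>(x) is orthogonal to \<phi>(C), testing
  against the codewords \<mu>_i c, which lie in C by linearity, shows that x \<cdot> c vanishes at
  every \<alpha>_i and is therefore 0 in R_{e,q}.\<close>

lemma of_nat_card_eq_0: "of_nat CARD('a::{ring_1,finite}) = (0::'a)"
proof -
  have "(\<Sum>x\<in>UNIV. x + 1) = (\<Sum>x\<in>(\<lambda>x. x + 1) ` (UNIV::'a set). x)"
    by (subst sum.reindex) (auto simp: inj_on_def)
  also have "(\<lambda>x. x + 1) ` (UNIV::'a set) = UNIV"
    by (rule surjI[of _ "\<lambda>x. x - 1"]) simp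
  finally have "(\<Sum>x\<in>UNIV. x + 1) = (\<Sum>x\<in>(UNIV::'a set). x)" .
  then show ?thesis by (simp add: sum.distrib)
qed

lemma of_nat_neq_0_if_card_eq:
  assumes "CARD('a) = e * t + 1"
  shows "of_nat e \<noteq> (0::'a::{ring_1,finite})"
  using of_nat_card_eq_0[where 'a='a] assms by auto

lemma degree_Upoly: "0 < e \<Longrightarrow> degree (Upoly e :: 'a::field poly) = e"
proof -
  assume "0 < e"
  then have "degree (monom (1::'a) e + (- 1)) = e"
    by (subst degree_add_eq_left) (auto simp: degree_monom_eq)
  then show ?thesis by (simp add: Upoly_def)
qed

lemma poly_Upoly: "poly (Upoly e) a = a ^ e - (1::'a::field)"
  by (simp add: Upoly_def poly_monom)

lemma not_linear_square_dvd_Upoly: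
  assumes e: "of_nat e \<noteq> (0::'a::field)"
  shows "\<not> [:- a, 1:] ^ 2 dvd (Upoly e :: 'a poly)"
proof
  assume "[:- a, 1:] ^ 2 dvd (Upoly e :: 'a poly)"
  then obtain Q where Q: "Upoly e = [:- a, 1:] ^ 2 * Q" by (elim dvdE)
  have root: "poly [:- a, 1:] a = 0" by simp
  have "poly (Upoly e) a = 0" "poly (pderiv (Upoly e)) a = 0"
    unfolding Q power2_eq_square
    by (simp_all only: pderiv_mult poly_add poly_mult root mult_zero_left mult_zero_right add_0)
  then have "a ^ e = 1" and "of_nat e * a ^ (e - 1) = 0"
    by (simp_all add: poly_Upoly Upoly_def pderiv_diff pderiv_monom poly_monom)
  moreover have "e \<noteq> 0" using e by (intro notI) simp
  ultimately have "a \<noteq> 0" by (metis power_0_left zero_neq_one)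
  with e \<open>of_nat e * a ^ (e - 1) = 0\<close> show False by simp
qed

lemma inj_on_if_no_linear_square_dvd_prod:
  fixes \<alpha> :: "'b \<Rightarrow> 'a::field"
  assumes sqf: "\<And>a. \<not> [:- a, 1:] ^ 2 dvd (\<Prod>i\<in>I. [:- \<alpha> i, 1:])" and fin: "finite I"
  shows "inj_on \<alpha> I"
proof (rule inj_onI, rule ccontr)
  fix i j assume i: "i \<in> I" and j: "j \<in> I" and eq: "\<alpha> i = \<alpha> j" and ne: "i \<noteq> j"
  have "(\<Prod>i\<in>I. [:- \<alpha> i, 1:]) = [:- \<alpha> i, 1:] * (\<Prod>k\<in>I - {i}. [:- \<alpha> k, 1:])"
    by (rule prod.remove[OF fin i])
  also have "(\<Prod>k\<in>I - {i}. [:- \<alpha> k, 1:]) = [:- \<alpha> j, 1:] * (\<Prod>k\<in>I - {i} - {j}. [:- \<alpha> k, 1:])"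
    using fin j ne by (intro prod.remove) auto
  finally have "(\<Prod>i\<in>I. [:- \<alpha> i, 1:]) = [:- \<alpha> i, 1:] ^ 2 * (\<Prod>k\<in>I - {i} - {j}. [:- \<alpha> k, 1:])"
    by (simp only: eq power2_eq_square mult.assoc)
  then show False using sqf by (metis dvdI)
qed

lemma sum_lessThan_mult_blocks:
  "(\<Sum>k<e * n. (f::nat \<Rightarrow> 'a::comm_monoid_add) k) = (\<Sum>j<n. \<Sum>k<e. f (j * e + k))"
proof -
  have "(\<Sum>k<e * n. f k) = (\<Sum>j<n. sum f {j * e..<j * e + e})"
    using sum.nat_group[of f e n] by (simp add: mult.commute)
  also have "\<dots> = (\<Sum>j<n. \<Sum>k<e. f (j * e + k))"
  proof (rule sum.cong[OF refl])
    fix j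
    have "{j * e..<j * e + e} = (\<lambda>k. j * e + k) ` {..<e}"
      by (simp add: lessThan_atLeast0 add.commute)
    then show "sum f {j * e..<j * e + e} = (\<Sum>k<e. f (j * e + k))"
      by (simp add: sum.reindex)
  qed
  finally show ?thesis .
qed

lemma inner_mult_orthogonal_rows:
  fixes M :: "nat \<Rightarrow> nat \<Rightarrow> 'a::comm_ring"
  assumes orth: "\<forall>i<e. \<forall>k<e. (\<Sum>l<e. M i l * M k l) = (if i = k then \<gamma> else 0)"
  shows "(\<Sum>k<e. (\<Sum>i<e. a i * M i k) * (\<Sum>l<e. b l * M l k)) = \<gamma> * (\<Sum>i<e. a i * b i)"
proof -
  have "(\<Sum>k<e. (\<Sum>i<e. a i * M i k) * (\<Sum>l<e. b l * M l k))
      = (\<Sum>k<e. \<Sum>i<e. \<Sum>l<e. a i * b l * (M i k * M l k))"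
    unfolding sum_product by (simp only: mult_ac)
  also have "\<dots> = (\<Sum>i<e. \<Sum>l<e. \<Sum>k<e. a i * b l * (M i k * M l k))"
    by (subst sum.swap) (rule sum.cong[OF refl], rule sum.swap)
  also have "\<dots> = (\<Sum>i<e. \<Sum>l<e. a i * b l * (\<Sum>k<e. M i k * M l k))"
    by (simp only: sum_distrib_left)
  also have "\<dots> = (\<Sum>i<e. \<Sum>l<e. a i * b l * (if i = l then \<gamma> else 0))"
    using orth by (intro sum.cong refl) auto
  also have "\<dots> = \<gamma> * (\<Sum>i<e. a i * b i)"
    by (simp add: if_distrib sum_distrib_left mult_ac cong: if_cong)
  finally show ?thesis .
qed

locale Upoly_split =
  fixes e :: nat and \<alpha> :: "nat \<Rightarrow> 'a::field"
  assumes e_pos: "0 < e" and Upoly_eq_prod: "Upoly e = (\<Prod>i<e. Gpoly \<alpha> i)"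
    and inj_roots: "inj_on \<alpha> {..<e}"
begin

lemma Upoly_nonzero: "Upoly e \<noteq> (0::'a poly)"
  using degree_Upoly[OF e_pos] e_pos by (metis degree_0 less_numeral_extra(3))

lemma Rcarrier_iff_degree: "r \<in> Rcarrier e \<longleftrightarrow> degree r < e"
  using e_pos by (auto simp: Rcarrier_def)

lemma mod_Upoly_in_Rcarrier: "f mod Upoly e \<in> Rcarrier e" for f :: "'a poly"
  using degree_mod_less[OF Upoly_nonzero, of f] by (auto simp: Rcarrier_def degree_Upoly[OF e_pos])

lemma poly_Upoly_root: "i < e \<Longrightarrow> poly (Upoly e) (\<alpha> i) = 0"
  unfolding Upoly_eq_prod by (auto simp: poly_prod Gpoly_def intro!: prod_zero)

lemma poly_mod_Upoly: "i < e \<Longrightarrow> poly (f mod Upoly e) (\<alpha> i) = poly f (\<alpha> i)"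
  by (metis div_mult_mod_eq poly_add poly_mult poly_Upoly_root mult_zero_right add_0)

lemma eq_0_if_poly_roots:
  assumes deg: "degree f < e" and roots: "\<And>i. i < e \<Longrightarrow> poly f (\<alpha> i) = 0"
  shows "f = 0"
proof (rule ccontr)
  assume f: "f \<noteq> 0"
  have "e = card (\<alpha> ` {..<e})" using inj_roots by (simp add: card_image)
  also have "\<dots> \<le> card {x. poly f x = 0}"
    using roots by (intro card_mono poly_roots_finite[OF f]) auto
  also have "\<dots> \<le> degree f" by (rule card_poly_roots_bound[OF f])
  finally show False using deg by simp
qed

lemma mod_Upoly_eq_0_iff: "f mod Upoly e = 0 \<longleftrightarrow> (\<forall>i<e. poly f (\<alpha> i) = 0)"
proof
  assume "\<forall>i<e. poly f (\<alpha> i) = 0"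
  then show "f mod Upoly e = 0"
    using mod_Upoly_in_Rcarrier by (intro eq_0_if_poly_roots) (auto simp: Rcarrier_iff_degree poly_mod_Upoly)
qed (metis poly_0 poly_mod_Upoly)

lemma Ghat_eq_prod: "i < e \<Longrightarrow> Ghat e \<alpha> i = (\<Prod>k\<in>{..<e} - {i}. Gpoly \<alpha> k)"
proof -
  assume "i < e"
  then have "Upoly e = Gpoly \<alpha> i * (\<Prod>k\<in>{..<e} - {i}. Gpoly \<alpha> k)"
    by (simp add: Upoly_eq_prod prod.remove)
  moreover have "Gpoly \<alpha> i \<noteq> 0" by (simp add: Gpoly_def)
  ultimately show ?thesis unfolding Ghat_def by simp
qed

lemma poly_Ghat_eq_0_iff:
  "i < e \<Longrightarrow> l < e \<Longrightarrow> poly (Ghat e \<alpha> i) (\<alpha> l) = 0 \<longleftrightarrow> l \<noteq> i"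
  using inj_roots by (auto simp: Ghat_eq_prod poly_prod Gpoly_def inj_on_def)

lemma hpoly_bezout: "i < e \<Longrightarrow> \<exists>z. z * Gpoly \<alpha> i + hpoly e \<alpha> i * Ghat e \<alpha> i = 1"
proof -
  assume i: "i < e"
  define h where "h = [:inverse (poly (Ghat e \<alpha> i) (\<alpha> i)):]"
  have "poly (1 - h * Ghat e \<alpha> i) (\<alpha> i) = 0"
    using poly_Ghat_eq_0_iff[OF i i] by (simp add: h_def)
  then obtain z where "1 - h * Ghat e \<alpha> i = Gpoly \<alpha> i * z"
    unfolding Gpoly_def poly_eq_0_iff_dvd by blast
  then have "\<exists>h z. z * Gpoly \<alpha> i + h * Ghat e \<alpha> i = 1"
    by (metis diff_add_cancel mult.commute)
  then show ?thesis unfolding hpoly_def by (rule someI_ex)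
qed

lemma poly_mu: "i < e \<Longrightarrow> l < e \<Longrightarrow> poly (mu e \<alpha> i) (\<alpha> l) = (if i = l then 1 else 0)"
proof -
  assume i: "i < e" and l: "l < e"
  obtain z where z: "z * Gpoly \<alpha> i + hpoly e \<alpha> i * Ghat e \<alpha> i = 1"
    using hpoly_bezout[OF i] by blast
  have "poly (mu e \<alpha> i) (\<alpha> l) = poly (hpoly e \<alpha> i) (\<alpha> l) * poly (Ghat e \<alpha> i) (\<alpha> l)"
    unfolding mu_def using l by (simp add: poly_mod_Upoly)
  also have "\<dots> = (if i = l then 1 else 0)"
  proof (cases "i = l")
    case True
    have "poly (z * Gpoly \<alpha> i + hpoly e \<alpha> i * Ghat e \<alpha> i) (\<alpha> i) = 1" using z by simp
    then show ?thesis using True by (simp add: Gpoly_def)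
  qed (use poly_Ghat_eq_0_iff[OF i l] in simp)
  finally show ?thesis .
qed

lemma mu_in_Rcarrier: "mu e \<alpha> i \<in> Rcarrier e"
  unfolding mu_def by (rule mod_Upoly_in_Rcarrier)

lemma poly_Rmult: "l < e \<Longrightarrow> poly (Rmult e a b) (\<alpha> l) = poly a (\<alpha> l) * poly b (\<alpha> l)"
  unfolding Rmult_def by (simp add: poly_mod_Upoly)

lemma poly_inner_Rmult_mu:
  "i < e \<Longrightarrow> l < e \<Longrightarrow> poly (\<Sum>j<n. x j * Rmult e (mu e \<alpha> i) (c j)) (\<alpha> l)
     = (if i = l then poly (\<Sum>j<n. x j * c j) (\<alpha> l) else 0)"
  by (simp add: poly_sum poly_Rmult poly_mu)

lemma poly_sum_smult_mu: "l < e \<Longrightarrow> poly (\<Sum>i<e. smult (s i) (mu e \<alpha> i)) (\<alpha> l) = s l"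
  by (simp add: poly_sum poly_mu if_distrib sum.delta cong: if_cong)

lemma Rcarrier_eq_sum_smult_mu:
  assumes r: "r \<in> Rcarrier e"
  shows "r = (\<Sum>i<e. smult (poly r (\<alpha> i)) (mu e \<alpha> i))"
proof -
  have "degree (\<Sum>i<e. smult (poly r (\<alpha> i)) (mu e \<alpha> i)) < e"
    using e_pos mu_in_Rcarrier
    by (intro degree_sum_less) (auto simp: Rcarrier_iff_degree intro: le_less_trans[OF degree_smult_le])
  then have "r - (\<Sum>i<e. smult (poly r (\<alpha> i)) (mu e \<alpha> i)) = 0"
    using r by (intro eq_0_if_poly_roots degree_diff_less) (simp_all add: Rcarrier_iff_degree poly_sum_smult_mu)
  then show ?thesis by simp
qed

lemma coords_eq_poly:
  assumes r: "r \<in> Rcarrier e"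
  shows "coords e \<alpha> r = (\<lambda>i. if i < e then poly r (\<alpha> i) else 0)"
  unfolding coords_def
proof (rule the_equality)
  show "(\<forall>i\<ge>e. (if i < e then poly r (\<alpha> i) else 0) = 0) \<and>
      r = (\<Sum>i<e. smult (if i < e then poly r (\<alpha> i) else 0) (mu e \<alpha> i))"
    using Rcarrier_eq_sum_smult_mu[OF r] by simp
  fix s assume s: "(\<forall>i\<ge>e. s i = 0) \<and> r = (\<Sum>i<e. smult (s i) (mu e \<alpha> i))"
  then show "s = (\<lambda>i. if i < e then poly r (\<alpha> i) else 0)"
    using poly_sum_smult_mu by fastforce
qed

lemma gray_block_entry:
  assumes x: "x \<in> Rvecs e n" and j: "j < n" and k: "k < e"
  shows "gray e \<alpha> M n x (j * e + k) = (\<Sum>i<e. poly (x j) (\<alpha> i) * M i k)"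
proof -
  have "j * e + k < (j + 1) * e" using k by simp
  also have "\<dots> \<le> n * e" using j by (intro mult_right_mono) auto
  finally have "j * e + k < e * n" by (simp add: mult.commute)
  moreover have "(j * e + k) div e = j" "(j * e + k) mod e = k" using k by auto
  moreover have "x j \<in> Rcarrier e" using x j by (simp add: Rvecs_def)
  ultimately show ?thesis by (simp add: gray_def coords_eq_poly)
qed

lemma inner_gray:
  assumes orth: "\<forall>i<e. \<forall>k<e. (\<Sum>l<e. M i l * M k l) = (if i = k then \<gamma> else 0)"
    and x: "x \<in> Rvecs e n" and c: "c \<in> Rvecs e n"
  shows "(\<Sum>k<e * n. gray e \<alpha> M n x k * gray e \<alpha> M n c k)
       = \<gamma> * (\<Sum>i<e. poly (\<Sum>j<n. x j * c j) (\<alpha> i))"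
proof -
  have "(\<Sum>k<e * n. gray e \<alpha> M n x k * gray e \<alpha> M n c k)
     = (\<Sum>j<n. \<Sum>k<e. (\<Sum>i<e. poly (x j) (\<alpha> i) * M i k) * (\<Sum>l<e. poly (c j) (\<alpha> l) * M l k))"
    by (simp add: sum_lessThan_mult_blocks gray_block_entry[OF x] gray_block_entry[OF c])
  also have "\<dots> = (\<Sum>j<n. \<gamma> * (\<Sum>i<e. poly (x j) (\<alpha> i) * poly (c j) (\<alpha> i)))"
    by (simp add: inner_mult_orthogonal_rows[OF orth])
  also have "\<dots> = \<gamma> * (\<Sum>i<e. \<Sum>j<n. poly (x j) (\<alpha> i) * poly (c j) (\<alpha> i))"
    by (simp only: sum_distrib_left[symmetric] sum.swap[of _ "{..<n}"])
  also have "\<dots> = \<gamma> * (\<Sum>i<e. poly (\<Sum>j<n. x j * c j) (\<alpha> i))"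
    by (simp only: poly_sum poly_mult)
  finally show ?thesis .
qed

lemma gray_in_Fdual_iff_in_Rdual:
  assumes orth: "\<forall>i<e. \<forall>k<e. (\<Sum>l<e. M i l * M k l) = (if i = k then \<gamma> else 0)"
    and "\<gamma> \<noteq> 0" and C: "R_linear_code e n C" and x: "x \<in> Rvecs e n"
  shows "gray e \<alpha> M n x \<in> Fdual (e * n) (gray e \<alpha> M n ` C) \<longleftrightarrow> x \<in> Rdual e n C"
proof -
  have Cvecs: "C \<subseteq> Rvecs e n"
    and Cmult: "\<And>r c. r \<in> Rcarrier e \<Longrightarrow> c \<in> C \<Longrightarrow> (\<lambda>j. Rmult e r (c j)) \<in> C"
    using C by (auto simp: R_linear_code_def)
  let ?vanish = "\<lambda>c. \<forall>i<e. poly (\<Sum>j<n. x j * c j) (\<alpha> i) = 0"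
  have inner: "(\<Sum>k<e * n. gray e \<alpha> M n x k * gray e \<alpha> M n c k)
      = \<gamma> * (\<Sum>i<e. poly (\<Sum>j<n. x j * c j) (\<alpha> i))" if "c \<in> C" for c
    using that Cvecs by (intro inner_gray[OF orth x]) auto
  have "gray e \<alpha> M n x \<in> Fvecs (e * n)" by (simp add: Fvecs_def gray_def)
  then have "gray e \<alpha> M n x \<in> Fdual (e * n) (gray e \<alpha> M n ` C)
      \<longleftrightarrow> (\<forall>c\<in>C. (\<Sum>i<e. poly (\<Sum>j<n. x j * c j) (\<alpha> i)) = 0)"
    using \<open>\<gamma> \<noteq> 0\<close> by (simp add: Fdual_def inner)
  also have "\<dots> \<longleftrightarrow> (\<forall>c\<in>C. ?vanish c)"
  proof (intro iffI ballI allI impI)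
    fix c i assume sums: "\<forall>c\<in>C. (\<Sum>l<e. poly (\<Sum>j<n. x j * c j) (\<alpha> l)) = 0"
      and c: "c \<in> C" and i: "i < e"
    \<comment> \<open>Multiplying c by the idempotent \<mu>_i kills all values except the one at \<alpha>_i.\<close>
    from bspec[OF sums Cmult[OF mu_in_Rcarrier c]]
    have "(\<Sum>l<e. poly (\<Sum>j<n. x j * Rmult e (mu e \<alpha> i) (c j)) (\<alpha> l)) = 0" by simp
    then show "poly (\<Sum>j<n. x j * c j) (\<alpha> i) = 0"
      using i by (simp add: poly_inner_Rmult_mu sum.delta')
  qed simp
  also have "\<dots> \<longleftrightarrow> x \<in> Rdual e n C"
    using x by (simp add: Rdual_def mod_Upoly_eq_0_iff)
  finally show ?thesis .
qed

end

theorem lemma4p7: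
  fixes p m e t n :: nat and \<gamma> :: "'a::{field,finite}"
    and \<alpha> :: "nat \<Rightarrow> 'a" and M :: "nat \<Rightarrow> nat \<Rightarrow> 'a"
    and C :: "(nat \<Rightarrow> 'a poly) set"
  assumes "prime p" and "odd p" and "CARD('a) = p ^ m"
    and "CARD('a) = e * t + 1" and "e \<ge> 2" and "t \<ge> 1"
    and "Upoly e = (\<Prod>i<e. Gpoly \<alpha> i)"
    and "\<exists>N. (\<forall>i<e. \<forall>k<e. (\<Sum>l<e. N i l * M l k) = (if i = k then 1 else 0)) \<and>
             (\<forall>i<e. \<forall>k<e. (\<Sum>l<e. M i l * N l k) = (if i = k then 1 else 0))"
    and "\<gamma> \<noteq> 0"
    and "\<forall>i<e. \<forall>k<e. (\<Sum>l<e. M i l * M k l) = (if i = k then \<gamma> else 0)"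
    and "R_linear_code e n C"
  shows "gray e \<alpha> M n ` (C \<inter> Rdual e n C)
           = gray e \<alpha> M n ` C \<inter> Fdual (e * n) (gray e \<alpha> M n ` C)"
proof -
  have "\<not> [:- a, 1:] ^ 2 dvd (\<Prod>i<e. [:- \<alpha> i, 1:])" for a
    using not_linear_square_dvd_Upoly[OF of_nat_neq_0_if_card_eq[OF assms(4)]] assms(7)
    by (simp add: Gpoly_def)
  then have "inj_on \<alpha> {..<e}" by (simp add: inj_on_if_no_linear_square_dvd_prod)
  then interpret Upoly_split e \<alpha> using assms(5,7) by unfold_locales auto
  have "x \<in> C \<Longrightarrow> gray e \<alpha> M n x \<in> Fdual (e * n) (gray e \<alpha> M n ` C) \<longleftrightarrow> x \<in> Rdual e n C" for x
    using gray_in_Fdual_iff_in_Rdual[OF assms(10,9,11)] assms(11)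
    by (auto simp: R_linear_code_def)
  then show ?thesis by blast
qed

end
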